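(* For a semiring $(S,+,\cdot)$ the following are equivalent: (i) $S$ is a b-lattice of nil-extensions of rectangular skew-rings; (ii) $S$ is a quasi completely regular semiring and for all $e,f\in E^+(S)$ there exists a positive integer $n$ such that $n(e+f)=(n+1)(e+f)$; (iii) $S$ is additively quasi regular, $b^2\,\mathscr{H}^{*^{+}}\,b$ for all $b\in S$, and for all $a,x\in S$, $a=a+x+a$ implies $a=a+2x+2a$.
   Context: A semiring $(S,+,\cdot)$ has two associative operations with $a(b+c)=ab+ac$, $(b+c)a=ba+ca$. For a positive integer $n$, $na=a+\dots+a$ ($n$ terms); $b^2=b\cdot b$. $E^+(S)$ is the set of additive idempotents. $a$ is additively regular if $a=a+x+a$ for some $x\in S$; $S$ is additively quasi regular if for each $a$ some $na$ is additively regular. $a$ is completely regular if there is $x$ with $a=a+x+a$, $a+x=x+a$, $a(a+x)=a+x$; $S$ is quasi completely regular if for each $a\in S$ some $na$ is completely regular. Green's relations of $(S,+)$ are denoted $\mathscr{L}^+,\mathscr{R}^+,\mathscr{J}^+,\mathscr{H}^+$. For additively quasi regular $S$ and $a\in S$, let $m(a)$ be the least positive integer with $m(a)a$ additively regular; define $a\,\mathscr{L}^{*^{+}}\,b$ iff $m(a)a\,\mathscr{L}^+\,m(b)b$, $a\,\mathscr{R}^{*^{+}}\,b$ iff $m(a)a\,\mathscr{R}^+\,m(b)b$, and $\mathscr{H}^{*^{+}}=\mathscr{L}^{*^{+}}\cap\mathscr{R}^{*^{+}}$. A completely simple semiring is a semiring in which every element is completely regular and $\mathscr{J}^+=S\times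 S$. A rectangular skew-ring is a completely simple semiring $K$ with $E^+(K)$ a subsemigroup of $(K,+)$. A semiring $S$ is a nil-extension of a subsemiring $K$ if $K$ is a bi-ideal of $S$ (for $a\in K$, $x\in S$: $a+x,x+a,ax,xa\in K$) and for every $a\in S$ there is $n\ge1$ with $na\in K$. A b-lattice is a semiring with $(S,\cdot)$ a band and $(S,+)$ a semilattice. $S$ is a b-lattice of semirings of a given class if there is a congruence $\rho$ on $S$ with $S/\rho$ a b-lattice and every $\rho$-class a subsemiring of that class. *)

theory Defs
  imports Main
begin

text \<open>A semiring is given by two binary operations pl (addition) and ml
 (multiplication) on a type; no zero, identity or commutativity is assumed.
 Subsemirings are subsets closed under both operations.\<close>

definition semiring :: "('a \<Rightarrow> 'a \<Rightarrow> 'a) \<Rightarrow> ('a \<Rightarrow> 'a \<Rightarrow> 'a) \<Rightarrow> bool" where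
  "semiring pl ml \<longleftrightarrow>
     (\<forall>a b c. pl (pl a b) c = pl a (pl b c)) \<and>
     (\<forall>a b c. ml (ml a b) c = ml a (ml b c)) \<and>
     (\<forall>a b c. ml a (pl b c) = pl (ml a b) (ml a c)) \<and>
     (\<forall>a b c. ml (pl b c) a = pl (ml b a) (ml c a))"

definition closed_sub :: "('a \<Rightarrow> 'a \<Rightarrow> 'a) \<Rightarrow> ('a \<Rightarrow> 'a \<Rightarrow> 'a) \<Rightarrow> 'a set \<Rightarrow> bool" where
  "closed_sub pl ml A \<longleftrightarrow> (\<forall>a\<in>A. \<forall>b\<in>A. pl a b \<in> A \<and> ml a b \<in> A)"

text \<open>n-fold sum n a = a + ... + a, for n \<ge> 1 (the value at 0 is irrelevant).\<close>
fun nsm :: "('a \<Rightarrow> 'a \<Rightarrow> 'a) \<Rightarrow> nat \<Rightarrow> 'a \<Rightarrow> 'a" where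
  "nsm pl 0 a = a"
| "nsm pl (Suc 0) a = a"
| "nsm pl (Suc (Suc n)) a = pl (nsm pl (Suc n) a) a"

definition addE :: "('a \<Rightarrow> 'a \<Rightarrow> 'a) \<Rightarrow> 'a set \<Rightarrow> 'a set" where
  "addE pl A = {e \<in> A. pl e e = e}"

definition add_regular :: "'a set \<Rightarrow> ('a \<Rightarrow> 'a \<Rightarrow> 'a) \<Rightarrow> 'a \<Rightarrow> bool" where
  "add_regular A pl a \<longleftrightarrow> (\<exists>x\<in>A. a = pl (pl a x) a)"

definition compl_regular ::
  "'a set \<Rightarrow> ('a \<Rightarrow> 'a \<Rightarrow> 'a) \<Rightarrow> ('a \<Rightarrow> 'a \<Rightarrow> 'a) \<Rightarrow> 'a \<Rightarrow> bool" where
  "compl_regular A pl ml a \<longleftrightarrow>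
     (\<exists>x\<in>A. a = pl (pl a x) a \<and> pl a x = pl x a \<and> ml a (pl a x) = pl a x)"

definition add_quasi_regular :: "('a \<Rightarrow> 'a \<Rightarrow> 'a) \<Rightarrow> bool" where
  "add_quasi_regular pl \<longleftrightarrow> (\<forall>a. \<exists>n\<ge>1. add_regular UNIV pl (nsm pl n a))"

definition quasi_compl_regular :: "('a \<Rightarrow> 'a \<Rightarrow> 'a) \<Rightarrow> ('a \<Rightarrow> 'a \<Rightarrow> 'a) \<Rightarrow> bool" where
  "quasi_compl_regular pl ml \<longleftrightarrow> (\<forall>a. \<exists>n\<ge>1. compl_regular UNIV pl ml (nsm pl n a))"

text \<open>Green's relations of the semigroup (A,+), via principal one-sided / two-sided ideals
  of A^1.\<close>
definition lideal :: "'a set \<Rightarrow> ('a \<Rightarrow> 'a \<Rightarrow> 'a) \<Rightarrow> 'a \<Rightarrow> 'a set" where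
  "lideal A pl a = insert a ((\<lambda>s. pl s a) ` A)"

definition rideal :: "'a set \<Rightarrow> ('a \<Rightarrow> 'a \<Rightarrow> 'a) \<Rightarrow> 'a \<Rightarrow> 'a set" where
  "rideal A pl a = insert a ((\<lambda>s. pl a s) ` A)"

definition tideal :: "'a set \<Rightarrow> ('a \<Rightarrow> 'a \<Rightarrow> 'a) \<Rightarrow> 'a \<Rightarrow> 'a set" where
  "tideal A pl a = insert a ((\<lambda>s. pl s a) ` A \<union> (\<lambda>s. pl a s) ` A
                         \<union> {pl (pl s a) t | s t. s \<in> A \<and> t \<in> A})"

definition greenL :: "'a set \<Rightarrow> ('a \<Rightarrow> 'a \<Rightarrow> 'a) \<Rightarrow> 'a \<Rightarrow> 'a \<Rightarrow> bool" where
  "greenL A pl a b \<longleftrightarrow> lideal A pl a = lideal A pl b"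

definition greenR :: "'a set \<Rightarrow> ('a \<Rightarrow> 'a \<Rightarrow> 'a) \<Rightarrow> 'a \<Rightarrow> 'a \<Rightarrow> bool" where
  "greenR A pl a b \<longleftrightarrow> rideal A pl a = rideal A pl b"

definition greenJ :: "'a set \<Rightarrow> ('a \<Rightarrow> 'a \<Rightarrow> 'a) \<Rightarrow> 'a \<Rightarrow> 'a \<Rightarrow> bool" where
  "greenJ A pl a b \<longleftrightarrow> tideal A pl a = tideal A pl b"

definition mreg :: "('a \<Rightarrow> 'a \<Rightarrow> 'a) \<Rightarrow> 'a \<Rightarrow> nat" where
  "mreg pl a = (LEAST n. n \<ge> 1 \<and> add_regular UNIV pl (nsm pl n a))"

definition Lstar :: "('a \<Rightarrow> 'a \<Rightarrow> 'a) \<Rightarrow> 'a \<Rightarrow> 'a \<Rightarrow> bool" where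
  "Lstar pl a b \<longleftrightarrow> greenL UNIV pl (nsm pl (mreg pl a) a) (nsm pl (mreg pl b) b)"

definition Rstar :: "('a \<Rightarrow> 'a \<Rightarrow> 'a) \<Rightarrow> 'a \<Rightarrow> 'a \<Rightarrow> bool" where
  "Rstar pl a b \<longleftrightarrow> greenR UNIV pl (nsm pl (mreg pl a) a) (nsm pl (mreg pl b) b)"

definition Hstar :: "('a \<Rightarrow> 'a \<Rightarrow> 'a) \<Rightarrow> 'a \<Rightarrow> 'a \<Rightarrow> bool" where
  "Hstar pl a b \<longleftrightarrow> Lstar pl a b \<and> Rstar pl a b"

definition compl_simple ::
  "('a \<Rightarrow> 'a \<Rightarrow> 'a) \<Rightarrow> ('a \<Rightarrow> 'a \<Rightarrow> 'a) \<Rightarrow> 'a set \<Rightarrow> bool" where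
  "compl_simple pl ml K \<longleftrightarrow> closed_sub pl ml K \<and>
     (\<forall>a\<in>K. compl_regular K pl ml a) \<and> (\<forall>a\<in>K. \<forall>b\<in>K. greenJ K pl a b)"

definition rect_skew_ring ::
  "('a \<Rightarrow> 'a \<Rightarrow> 'a) \<Rightarrow> ('a \<Rightarrow> 'a \<Rightarrow> 'a) \<Rightarrow> 'a set \<Rightarrow> bool" where
  "rect_skew_ring pl ml K \<longleftrightarrow> compl_simple pl ml K \<and>
     (\<forall>e\<in>addE pl K. \<forall>f\<in>addE pl K. pl e f \<in> addE pl K)"

definition nil_extension ::
  "('a \<Rightarrow> 'a \<Rightarrow> 'a) \<Rightarrow> ('a \<Rightarrow> 'a \<Rightarrow> 'a) \<Rightarrow> 'a set \<Rightarrow> 'a set \<Rightarrow> bool" where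
  "nil_extension pl ml C K \<longleftrightarrow> closed_sub pl ml C \<and> K \<subseteq> C \<and> closed_sub pl ml K \<and>
     (\<forall>a\<in>K. \<forall>x\<in>C. pl a x \<in> K \<and> pl x a \<in> K \<and> ml a x \<in> K \<and> ml x a \<in> K) \<and>
     (\<forall>a\<in>C. \<exists>n\<ge>1. nsm pl n a \<in> K)"

definition congruence ::
  "('a \<Rightarrow> 'a \<Rightarrow> 'a) \<Rightarrow> ('a \<Rightarrow> 'a \<Rightarrow> 'a) \<Rightarrow> ('a \<Rightarrow> 'a \<Rightarrow> bool) \<Rightarrow> bool" where
  "congruence pl ml r \<longleftrightarrow> equivp r \<and>
     (\<forall>a b c d. r a b \<and> r c d \<longrightarrow> r (pl a c) (pl b d) \<and> r (ml a c) (ml b d))"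

text \<open>The quotient S/r is a b-lattice: (S/r,\<cdot>) is a band and (S/r,+) a semilattice
  (associativity is inherited from S), written out on representatives.\<close>
definition quotient_b_lattice ::
  "('a \<Rightarrow> 'a \<Rightarrow> 'a) \<Rightarrow> ('a \<Rightarrow> 'a \<Rightarrow> 'a) \<Rightarrow> ('a \<Rightarrow> 'a \<Rightarrow> bool) \<Rightarrow> bool" where
  "quotient_b_lattice pl ml r \<longleftrightarrow>
     (\<forall>a. r (ml a a) a) \<and> (\<forall>a. r (pl a a) a) \<and> (\<forall>a b. r (pl a b) (pl b a))"

definition b_lattice_of_nil_ext_rsr :: "('a \<Rightarrow> 'a \<Rightarrow> 'a) \<Rightarrow> ('a \<Rightarrow> 'a \<Rightarrow> 'a) \<Rightarrow> bool" where
  "b_lattice_of_nil_ext_rsr pl ml \<longleftrightarrow>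
     (\<exists>r. congruence pl ml r \<and> quotient_b_lattice pl ml r \<and>
        (\<forall>a. closed_sub pl ml {x. r a x} \<and>
             (\<exists>K. nil_extension pl ml {x. r a x} K \<and> rect_skew_ring pl ml K)))"

end

theory Submission
  imports Defs
begin

text \<open>
  Under quasi complete regularity every a has a multiple n a in a subgroup of (S,+); the
  identity a\<degree> of that subgroup does not depend on n, and a a\<degree> = a\<degree> a = a\<degree>,
  (a b)\<degree> = a\<degree> b\<degree>, (a + b)\<degree> = (a\<degree> + b\<degree>)\<degree>.  Hence the additive
  idempotents form a band under e \<circ> f = (e + f)\<degree>, and relating a and b when a\<degree> and
  b\<degree> are \<D>-related in this band is a congruence whose quotient is a b-lattice.  In each
  class the completely regular elements form a completely simple bi-ideal, and if sums of
  idempotents have an idempotent multiple then a sum of two of its idempotents lies in a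
  subgroup and is idempotent, so it is its identity: (ii) \<Longrightarrow> (i).

  Conversely, (i) makes S quasi completely regular.  For a = a + x + a the idempotents a + x
  and x + a lie in the rectangular skew-ring of the class of a, so their sum is an idempotent
  with the same idempotent a\<degree> as a + x + a, i.e. it is a\<degree>, and a + 2x + 2a = a\<degree> + a = a;
  b\<twosuperior> H*+ b holds because (b\<twosuperior>)\<degree> = b\<degree>.  For (iii) \<Longrightarrow> (ii), the identity
  a + 2x + 2a = a puts every additively regular element b into a subgroup H, and
  b\<twosuperior> H*+ b forces b e = e for the identity e of H, so b is completely regular.  Finally
  for idempotents e, f the identity, applied inside the subgroup of p = (e + f)\<degree> to the
  idempotents p + e and f + p, gives p + (e + f) = p, so (e + f) has an idempotent multiple.
\<close>

definition idempotent_sums_periodic :: "('a \<Rightarrow> 'a \<Rightarrow> 'a) \<Rightarrow> bool" where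
  "idempotent_sums_periodic pl \<longleftrightarrow>
     (\<forall>e\<in>addE pl UNIV. \<forall>f\<in>addE pl UNIV. \<exists>n\<ge>1. nsm pl n (pl e f) = nsm pl (n + 1) (pl e f))"

definition regular_doubling :: "('a \<Rightarrow> 'a \<Rightarrow> 'a) \<Rightarrow> bool" where
  "regular_doubling pl \<longleftrightarrow>
     (\<forall>a x. a = pl (pl a x) a \<longrightarrow> a = pl (pl a (nsm pl 2 x)) (nsm pl 2 a))"

section \<open>Green's \<open>\<D>\<close>-relation of a band\<close>

definition band_D :: "('a \<Rightarrow> 'a \<Rightarrow> 'a) \<Rightarrow> 'a \<Rightarrow> 'a \<Rightarrow> bool" where
  "band_D m x y \<longleftrightarrow> m (m x y) x = x \<and> m (m y x) y = y"

locale band_on =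
  fixes B :: "'a set" and m :: "'a \<Rightarrow> 'a \<Rightarrow> 'a"
  assumes assoc: "m (m x y) z = m x (m y z)"
    and idem: "x \<in> B \<Longrightarrow> m x x = x"
    and closed: "m x y \<in> B"
begin

lemma band_D_refl: "x \<in> B \<Longrightarrow> band_D m x x"
  unfolding band_D_def by (simp add: idem)

lemma band_D_sym: "band_D m x y \<Longrightarrow> band_D m y x"
  unfolding band_D_def by simp

lemma band_D_trans: "band_D m x y \<Longrightarrow> band_D m y z \<Longrightarrow> band_D m x z"
  unfolding band_D_def by (metis assoc closed idem)

lemma band_D_mult_right:
  assumes "x \<in> B" "y \<in> B" "z \<in> B" "band_D m x y"
  shows "band_D m (m x z) (m y z)"
  using assms unfolding band_D_def by (metis assoc closed idem)

lemma band_D_mult_left: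
  assumes "x \<in> B" "y \<in> B" "z \<in> B" "band_D m x y"
  shows "band_D m (m z x) (m z y)"
  using assms unfolding band_D_def by (metis assoc closed idem)

lemma band_D_commute: "x \<in> B \<Longrightarrow> y \<in> B \<Longrightarrow> band_D m (m x y) (m y x)"
  unfolding band_D_def by (metis assoc closed idem)

end

section \<open>Maximal additive subgroups of a semiring\<close>

locale semiring_ops =
  fixes pl :: "'a \<Rightarrow> 'a \<Rightarrow> 'a" (infixr \<open>\<oplus>\<close> 65)
    and ml :: "'a \<Rightarrow> 'a \<Rightarrow> 'a" (infixr \<open>\<otimes>\<close> 70)
  assumes semiring: "semiring pl ml"
begin

lemma sadd_assoc [simp]: "(a \<oplus> b) \<oplus> c = a \<oplus> (b \<oplus> c)"
  using semiring unfolding semiring_def by blast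

lemma sdistrib_left: "a \<otimes> (b \<oplus> c) = a \<otimes> b \<oplus> a \<otimes> c"
  using semiring unfolding semiring_def by blast

lemma sdistrib_right: "(b \<oplus> c) \<otimes> a = b \<otimes> a \<oplus> c \<otimes> a"
  using semiring unfolding semiring_def by blast

lemma add_assoc_subst: "a \<oplus> b = c \<Longrightarrow> a \<oplus> (b \<oplus> x) = c \<oplus> x"
  by (metis sadd_assoc)

abbreviation N :: "nat \<Rightarrow> 'a \<Rightarrow> 'a" where "N n a \<equiv> nsm pl n a"

lemma nsm_2: "N 2 a = a \<oplus> a"
  by (simp add: numeral_2_eq_2)

lemma nsm_Suc_Suc_left: "N (Suc (Suc n)) a = a \<oplus> N (Suc n) a"
  by (induction n) auto

lemma nsm_add: "N (Suc m + Suc n) a = N (Suc m) a \<oplus> N (Suc n) a"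
  by (induction n) auto

lemma nsm_mult: "N (Suc m * Suc n) a = N (Suc m) (N (Suc n) a)"
proof (induction m)
  case (Suc m)
  have "Suc (Suc m) * Suc n = Suc n + Suc (m * Suc n + n)" by simp
  then have "N (Suc (Suc m) * Suc n) a = N (Suc n) a \<oplus> N (Suc m * Suc n) a"
    by (simp only: nsm_add) (simp add: algebra_simps)
  then show ?case by (simp only: nsm_Suc_Suc_left[of m "N (Suc n) a"] Suc.IH)
qed simp

lemma nsm_idempotent: "e \<oplus> e = e \<Longrightarrow> N n e = e"
proof (induction n)
  case (Suc n) then show ?case by (cases n) auto
qed auto

lemma nsm_mult_right: "N (Suc n) (a \<otimes> b) = N (Suc n) a \<otimes> b"
  by (induction n) (auto simp: sdistrib_right)

lemma nsm_mult_left: "N (Suc n) (a \<otimes> b) = a \<otimes> N (Suc n) b"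
  by (induction n) (auto simp: sdistrib_left)

lemma nsm_absorb_left: "e \<oplus> a = a \<Longrightarrow> e \<oplus> N (Suc n) a = N (Suc n) a"
  by (induction n) (auto simp: add_assoc_subst)

lemma nsm_absorb_right: "a \<oplus> e = a \<Longrightarrow> N (Suc n) a \<oplus> e = N (Suc n) a"
proof (induction n)
  case (Suc n) then show ?case by (simp only: nsm_Suc_Suc_left) (metis sadd_assoc)
qed simp

lemma idempotent_mult_right: "e \<oplus> e = e \<Longrightarrow> (e \<otimes> s) \<oplus> (e \<otimes> s) = e \<otimes> s"
  by (metis sdistrib_right)

lemma idempotent_mult_left: "e \<oplus> e = e \<Longrightarrow> (s \<otimes> e) \<oplus> (s \<otimes> e) = s \<otimes> e"
  by (metis sdistrib_left)

text \<open>\<open>in_group e g\<close>: g lies in the maximal subgroup of (S,+) with identity e.\<close>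

definition in_group :: "'a \<Rightarrow> 'a \<Rightarrow> bool" where
  "in_group e g \<longleftrightarrow> e \<oplus> e = e \<and> e \<oplus> g = g \<and> g \<oplus> e = g \<and>
     (\<exists>h. g \<oplus> h = e \<and> h \<oplus> g = e \<and> e \<oplus> h = h \<and> h \<oplus> e = h)"

lemma in_groupI:
  assumes "e \<oplus> e = e" "e \<oplus> g = g" "g \<oplus> e = g" "g \<oplus> h = e" "h \<oplus> g = e"
  shows "in_group e g"
  unfolding in_group_def
  using assms add_assoc_subst[OF assms(1)] add_assoc_subst[OF assms(3)] add_assoc_subst[OF assms(4)]
  by (intro conjI exI[of _ "e \<oplus> h \<oplus> e"]) simp_all

lemma in_groupD:
  assumes "in_group e g"
  shows "e \<oplus> e = e" "e \<oplus> g = g" "g \<oplus> e = g"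
  using assms unfolding in_group_def by auto

lemma in_group_inverse:
  assumes "in_group e g"
  obtains h where "in_group e h" "g \<oplus> h = e" "h \<oplus> g = e"
  using assms that unfolding in_group_def by blast

lemma in_group_add:
  assumes "in_group e g" "in_group e k"
  shows "in_group e (g \<oplus> k)"
proof -
  obtain g' where g': "in_group e g'" "g \<oplus> g' = e" "g' \<oplus> g = e"
    using in_group_inverse assms(1) by blast
  obtain k' where k': "in_group e k'" "k \<oplus> k' = e" "k' \<oplus> k = e"
    using in_group_inverse assms(2) by blast
  note units = in_groupD[OF assms(1)] in_groupD[OF assms(2)] in_groupD[OF g'(1)] in_groupD[OF k'(1)]
  show ?thesis
    using units g' k' add_assoc_subst[OF units(2)] add_assoc_subst[OF units(3)]
      add_assoc_subst[OF k'(2)] add_assoc_subst[OF g'(3)]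
    by (intro in_groupI[of e _ "k' \<oplus> g'"]) simp_all
qed

lemma in_group_nsm: "in_group e g \<Longrightarrow> in_group e (N (Suc n) g)"
  by (induction n) (auto intro: in_group_add)

lemma in_group_self: "e \<oplus> e = e \<Longrightarrow> in_group e e"
  by (rule in_groupI[of e e e]) auto

lemma in_group_identity_unique:
  assumes "in_group e g" "in_group f g"
  shows "e = f"
proof -
  obtain h where h: "g \<oplus> h = e" "h \<oplus> g = e" using in_group_inverse assms(1) by blast
  obtain k where k: "g \<oplus> k = f" "k \<oplus> g = f" using in_group_inverse assms(2) by blast
  note units = in_groupD[OF assms(1)] in_groupD[OF assms(2)]
  have "e \<oplus> f = f" using units k by (metis sadd_assoc)
  moreover have "e \<oplus> f = e" using units h by (metis sadd_assoc)
  ultimately show ?thesis by simp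
qed

lemma in_group_idempotent_eq: "in_group e g \<Longrightarrow> g \<oplus> g = g \<Longrightarrow> g = e"
  by (metis in_groupD(2) in_group_inverse sadd_assoc)

lemma in_group_cancel:
  assumes "in_group e g" "N (Suc n) g \<oplus> g = N (Suc n) g"
  shows "g = e"
proof -
  obtain w where "w \<oplus> N (Suc n) g = e" using in_group_inverse in_group_nsm[OF assms(1)] by metis
  then have "e \<oplus> g = e" using assms(2) by (metis sadd_assoc)
  then show ?thesis using in_groupD[OF assms(1)] by simp
qed

lemma in_group_mult_right:
  assumes "in_group e g"
  shows "in_group (e \<otimes> c) (g \<otimes> c)"
proof -
  obtain h where "g \<oplus> h = e" "h \<oplus> g = e" using in_group_inverse assms by blast
  then show ?thesis
    using in_groupD[OF assms] by (intro in_groupI[of _ _ "h \<otimes> c"]) (metis sdistrib_right)+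
qed

lemma in_group_mult_left:
  assumes "in_group e g"
  shows "in_group (c \<otimes> e) (c \<otimes> g)"
proof -
  obtain h where "g \<oplus> h = e" "h \<oplus> g = e" using in_group_inverse assms by blast
  then show ?thesis
    using in_groupD[OF assms] by (intro in_groupI[of _ _ "c \<otimes> h"]) (metis sdistrib_left)+
qed

lemma tideal_sandwich: "s \<in> K \<Longrightarrow> t \<in> K \<Longrightarrow> s \<oplus> k \<oplus> t \<in> tideal K pl k"
  unfolding tideal_def by (simp only: sadd_assoc[symmetric]) blast

lemma tideal_subset_if_sandwich:
  assumes closed: "\<And>x y. x \<in> K \<Longrightarrow> y \<in> K \<Longrightarrow> x \<oplus> y \<in> K"
    and st: "s \<in> K" "t \<in> K"
  shows "tideal K pl (s \<oplus> k \<oplus> t) \<subseteq> tideal K pl k"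
proof
  fix y assume "y \<in> tideal K pl (s \<oplus> k \<oplus> t)"
  then consider "y = s \<oplus> k \<oplus> t" | u where "u \<in> K" "y = (u \<oplus> s) \<oplus> k \<oplus> t"
    | u where "u \<in> K" "y = s \<oplus> k \<oplus> (t \<oplus> u)"
    | u v where "u \<in> K" "v \<in> K" "y = (u \<oplus> s) \<oplus> k \<oplus> (t \<oplus> v)"
    unfolding tideal_def by auto
  then show "y \<in> tideal K pl k"
  proof cases
    case 1
    then show ?thesis using tideal_sandwich[OF st] by simp
  next
    case 2
    then show ?thesis using tideal_sandwich[OF closed[OF 2(1) st(1)] st(2)] by simp
  next
    case 3
    then show ?thesis using tideal_sandwich[OF st(1) closed[OF st(2) 3(1)]] by simp
  next
    case 4
    then show ?thesis using tideal_sandwich[OF closed[OF 4(1) st(1)] closed[OF st(2) 4(2)]] by simp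
  qed
qed

lemma greenJ_if_sandwiches:
  assumes "\<And>x y. x \<in> K \<Longrightarrow> y \<in> K \<Longrightarrow> x \<oplus> y \<in> K"
    and "s \<in> K" "t \<in> K" "k = s \<oplus> l \<oplus> t" "s' \<in> K" "t' \<in> K" "l = s' \<oplus> k \<oplus> t'"
  shows "greenJ K pl k l"
  unfolding greenJ_def
  using tideal_subset_if_sandwich[OF assms(1)] assms(2-) by (metis subset_antisym)

end

section \<open>The idempotent attached to an element\<close>

locale qc_regular_semiring = semiring_ops +
  assumes quasi_compl_regular: "quasi_compl_regular pl ml"
begin

lemma exists_group_multiple: "\<exists>n e. in_group e (N (Suc n) a) \<and> N (Suc n) a \<otimes> e = e"
proof -
  obtain n where n: "n \<ge> 1" "compl_regular UNIV pl ml (N n a)"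
    using quasi_compl_regular unfolding quasi_compl_regular_def by blast
  then obtain x where x: "N n a = N n a \<oplus> x \<oplus> N n a" "N n a \<oplus> x = x \<oplus> N n a"
    "N n a \<otimes> (N n a \<oplus> x) = N n a \<oplus> x"
    unfolding compl_regular_def by auto
  then have "in_group (N n a \<oplus> x) (N n a)"
    by (intro in_groupI[of _ _ x]) (simp_all, metis sadd_assoc)
  moreover obtain m where "n = Suc m" using n(1) by (cases n) auto
  ultimately show ?thesis using x(3) by blast
qed

text \<open>idem_of a is the element a\<degree> of the introduction.\<close>

definition idem_of :: "'a \<Rightarrow> 'a" where
  "idem_of a = (SOME e. \<exists>n. in_group e (N (Suc n) a))"

lemma idem_of_group_multiple: "\<exists>n. in_group (idem_of a) (N (Suc n) a)"
  unfolding idem_of_def by (rule someI_ex) (use exists_group_multiple in blast)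

lemma idem_of_eqI:
  assumes "in_group e (N (Suc n) a)"
  shows "idem_of a = e"
proof -
  obtain m where m: "in_group (idem_of a) (N (Suc m) a)" using idem_of_group_multiple by blast
  have "in_group (idem_of a) (N (Suc n * Suc m) a)" using in_group_nsm[OF m] nsm_mult by metis
  moreover have "in_group e (N (Suc m * Suc n) a)" using in_group_nsm[OF assms] nsm_mult by metis
  ultimately show ?thesis using in_group_identity_unique by (metis mult.commute)
qed

lemma idem_of_in_group: "in_group e g \<Longrightarrow> idem_of g = e"
  using idem_of_eqI[of e 0 g] by simp

lemma idem_of_idempotent: "idem_of a \<oplus> idem_of a = idem_of a"
  using idem_of_group_multiple in_groupD by blast

lemma idem_of_idempotent_eq: "e \<oplus> e = e \<Longrightarrow> idem_of e = e"
  using idem_of_in_group in_group_self by blast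

lemma idem_of_idem_of [simp]: "idem_of (idem_of a) = idem_of a"
  using idem_of_idempotent_eq idem_of_idempotent by blast

lemma idem_of_nsm: "idem_of (N (Suc n) a) = idem_of a"
proof -
  obtain m where "in_group (idem_of a) (N (Suc m) a)" using idem_of_group_multiple by blast
  then have "in_group (idem_of a) (N (Suc m) (N (Suc n) a))"
    using in_group_nsm nsm_mult by (metis mult.commute)
  then show ?thesis using idem_of_eqI by blast
qed

lemma idem_of_double: "idem_of (a \<oplus> a) = idem_of a"
  using idem_of_nsm[of 1 a] by simp

lemma idem_of_group_multiple_Suc_Suc: "\<exists>k. in_group (idem_of a) (N (Suc (Suc k)) a)"
proof -
  obtain n where "in_group (idem_of a) (N (Suc n) a)" using idem_of_group_multiple by blast
  then have "in_group (idem_of a) (N (Suc 1 * Suc n) a)" using in_group_nsm nsm_mult by metis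
  moreover have "Suc 1 * Suc n = Suc (Suc (n + n))" by simp
  ultimately show ?thesis by metis
qed

lemma mult_idem_of_absorb: "a \<otimes> idem_of a = idem_of a"
proof -
  obtain n e where ne: "in_group e (N (Suc n) a)" "N (Suc n) a \<otimes> e = e"
    using exists_group_multiple by blast
  have "N (Suc n) (a \<otimes> e) = e" using ne(2) nsm_mult_right by metis
  moreover have "N (Suc n) (a \<otimes> e) = a \<otimes> e"
    using nsm_idempotent idempotent_mult_left in_groupD(1)[OF ne(1)] by blast
  ultimately show ?thesis using idem_of_eqI ne(1) by simp
qed

lemma mult_idempotent_idem_of:
  assumes "e \<oplus> e = e"
  shows "a \<otimes> e = idem_of a \<otimes> e" "e \<otimes> a = e \<otimes> idem_of a"
proof -
  obtain n where n: "in_group (idem_of a) (N (Suc n) a)" using idem_of_group_multiple by blast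
  have "N (Suc n) a \<otimes> e = a \<otimes> e"
    using nsm_mult_right[symmetric] nsm_idempotent[OF idempotent_mult_left[OF assms]] by simp
  then show "a \<otimes> e = idem_of a \<otimes> e"
    using in_group_mult_right[OF n] in_group_idempotent_eq idempotent_mult_left[OF assms] by metis
  have "e \<otimes> N (Suc n) a = e \<otimes> a"
    using nsm_mult_left[symmetric] nsm_idempotent[OF idempotent_mult_right[OF assms]] by simp
  then show "e \<otimes> a = e \<otimes> idem_of a"
    using in_group_mult_left[OF n] in_group_idempotent_eq idempotent_mult_right[OF assms] by metis
qed

lemma idem_of_mult_self: "idem_of a \<otimes> idem_of a = idem_of a"
  using mult_idem_of_absorb[of "idem_of a"] by simp

lemma idem_of_mult_absorb: "idem_of a \<otimes> a = idem_of a"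
  using mult_idempotent_idem_of(2)[OF idem_of_idempotent] idem_of_mult_self by simp

lemma idem_of_mult: "idem_of (a \<otimes> b) = idem_of a \<otimes> idem_of b"
proof -
  obtain n where "in_group (idem_of a) (N (Suc n) a)" using idem_of_group_multiple by blast
  then have "in_group (idem_of a \<otimes> b) (N (Suc n) (a \<otimes> b))"
    using in_group_mult_right nsm_mult_right by metis
  then have "idem_of (a \<otimes> b) = idem_of a \<otimes> b" using idem_of_eqI by blast
  then show ?thesis using mult_idempotent_idem_of(2)[OF idem_of_idempotent] by metis
qed

text \<open>For f = (a + b)\<degree> and p = (a\<degree> + b\<degree>)\<degree>, distributivity together with
  e c = e c\<degree> and c e = c\<degree> e for idempotent e gives f = f p = p.\<close>

lemma idem_of_add: "idem_of (a \<oplus> b) = idem_of (idem_of a \<oplus> idem_of b)"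
proof -
  define f where "f = idem_of (a \<oplus> b)"
  define p where "p = idem_of (idem_of a \<oplus> idem_of b)"
  have idem: "f \<oplus> f = f" "p \<oplus> p = p" unfolding f_def p_def using idem_of_idempotent by auto
  have "f = f \<otimes> (a \<oplus> b)" using idem_of_mult_absorb f_def by metis
  also have "\<dots> = f \<otimes> (idem_of a \<oplus> idem_of b)"
    using sdistrib_left mult_idempotent_idem_of(2)[OF idem(1)] by metis
  also have "\<dots> = f \<otimes> p" using mult_idempotent_idem_of(2)[OF idem(1)] p_def by metis
  finally have fp: "f = f \<otimes> p" .
  have "p = (idem_of a \<oplus> idem_of b) \<otimes> p" using mult_idem_of_absorb p_def by metis
  also have "\<dots> = (a \<oplus> b) \<otimes> p" using sdistrib_right mult_idempotent_idem_of(1)[OF idem(2)] by metis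
  also have "\<dots> = f \<otimes> p" using mult_idempotent_idem_of(1)[OF idem(2)] f_def by metis
  finally show ?thesis using fp unfolding f_def p_def by simp
qed

lemma idem_of_add_idem_of [simp]:
  "idem_of (idem_of a \<oplus> b) = idem_of (a \<oplus> b)"
  "idem_of (a \<oplus> idem_of b) = idem_of (a \<oplus> b)"
  "idem_of (a \<oplus> idem_of b \<oplus> c) = idem_of (a \<oplus> b \<oplus> c)"
  "idem_of (a \<oplus> b \<oplus> idem_of c) = idem_of (a \<oplus> b \<oplus> c)"
  by (metis idem_of_add idem_of_idem_of)+

lemma idem_of_add_double: "idem_of (a \<oplus> (x \<oplus> x) \<oplus> b) = idem_of (a \<oplus> x \<oplus> b)"
  by (metis idem_of_add_idem_of(3) idem_of_double)

lemma in_group_idem_ofI: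
  assumes "e \<oplus> e = e" "e \<oplus> t = t" "t \<oplus> e = t" "idem_of t = e"
  shows "in_group e t"
proof -
  obtain k where k: "in_group e (N (Suc (Suc k)) t)"
    using idem_of_group_multiple_Suc_Suc assms(4) by metis
  obtain w where w: "N (Suc (Suc k)) t \<oplus> w = e" "w \<oplus> N (Suc (Suc k)) t = e"
    using in_group_inverse k by blast
  define r where "r = N (Suc k) t \<oplus> w"
  define l where "l = w \<oplus> N (Suc k) t"
  have tr: "t \<oplus> r = e" using w(1) unfolding r_def nsm_Suc_Suc_left by simp
  have lt: "l \<oplus> t = e" using w(2) unfolding l_def by simp
  have "l = l \<oplus> e" unfolding l_def using nsm_absorb_right[OF assms(3)] by simp
  also have "\<dots> = e \<oplus> r" using tr lt by (metis sadd_assoc)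
  also have "\<dots> = r" unfolding r_def using nsm_absorb_left[OF assms(2)] by (metis sadd_assoc)
  finally have "l = r" .
  then show ?thesis using in_groupI[of e t r] assms tr lt by blast
qed

lemma idem_of_add_left_absorb: "idem_of a \<oplus> idem_of (a \<oplus> s) = idem_of (a \<oplus> s)"
proof -
  define f where "f = idem_of (a \<oplus> s)"
  have idem: "f \<oplus> f = f" unfolding f_def using idem_of_idempotent by blast
  obtain k where k: "in_group f (N (Suc (Suc k)) (a \<oplus> s))"
    using idem_of_group_multiple_Suc_Suc f_def by blast
  obtain h where h: "N (Suc (Suc k)) (a \<oplus> s) \<oplus> h = f" using in_group_inverse k by blast
  obtain R where "N (Suc (Suc k)) (a \<oplus> s) = a \<oplus> R"
    by (simp only: nsm_Suc_Suc_left) (metis sadd_assoc)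
  then have fR: "f = a \<oplus> R \<oplus> h" using h by simp
  have "f = (a \<oplus> s) \<otimes> f" using mult_idem_of_absorb f_def by metis
  also have "\<dots> = idem_of a \<otimes> f \<oplus> s \<otimes> f"
    using sdistrib_right mult_idempotent_idem_of(1)[OF idem] by metis
  also have "idem_of a \<otimes> f = idem_of a \<oplus> idem_of a \<otimes> (R \<oplus> h)"
    by (subst fR) (metis sdistrib_left idem_of_mult_absorb)
  finally have "f = idem_of a \<oplus> (idem_of a \<otimes> (R \<oplus> h) \<oplus> s \<otimes> f)" by simp
  then have "idem_of a \<oplus> f = f" using add_assoc_subst[OF idem_of_idempotent] by metis
  then show ?thesis unfolding f_def .
qed

lemma idem_of_add_right_absorb: "idem_of (s \<oplus> a) \<oplus> idem_of a = idem_of (s \<oplus> a)"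
proof -
  define f where "f = idem_of (s \<oplus> a)"
  have idem: "f \<oplus> f = f" unfolding f_def using idem_of_idempotent by blast
  obtain k where k: "in_group f (N (Suc (Suc k)) (s \<oplus> a))"
    using idem_of_group_multiple_Suc_Suc f_def by blast
  obtain h where h: "h \<oplus> N (Suc (Suc k)) (s \<oplus> a) = f" using in_group_inverse k by blast
  obtain R where "N (Suc (Suc k)) (s \<oplus> a) = R \<oplus> a"
    by (metis nsm.simps(3) sadd_assoc)
  then have fR: "f = (h \<oplus> R) \<oplus> a" using h by simp
  have "f = f \<otimes> (s \<oplus> a)" using idem_of_mult_absorb f_def by metis
  also have "\<dots> = f \<otimes> s \<oplus> f \<otimes> idem_of a"
    using sdistrib_left mult_idempotent_idem_of(2)[OF idem] by metis
  also have "f \<otimes> idem_of a = (h \<oplus> R) \<otimes> idem_of a \<oplus> idem_of a"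
    by (subst fR) (metis sdistrib_right mult_idem_of_absorb)
  finally have "f = (f \<otimes> s \<oplus> (h \<oplus> R) \<otimes> idem_of a) \<oplus> idem_of a" by simp
  then have "f \<oplus> idem_of a = f" using idem_of_idempotent by (metis sadd_assoc)
  then show ?thesis unfolding f_def .
qed

lemma add_regular_in_group:
  assumes "a \<oplus> x \<oplus> a = a"
  shows "in_group (idem_of a) a"
proof -
  have "idem_of (a \<oplus> x) = a \<oplus> x" "idem_of (x \<oplus> a) = x \<oplus> a"
    using assms by (metis idem_of_idempotent_eq sadd_assoc)+
  then have ax: "idem_of a \<oplus> (a \<oplus> x) = a \<oplus> x" and xa: "(x \<oplus> a) \<oplus> idem_of a = x \<oplus> a"
    using idem_of_add_left_absorb[of a x] idem_of_add_right_absorb[of x a] by simp_all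
  have "idem_of a \<oplus> a = a" using add_assoc_subst[OF ax, of a] assms by simp
  moreover have "a \<oplus> idem_of a = a" using xa assms by (metis sadd_assoc)
  ultimately show ?thesis using in_group_idem_ofI idem_of_idempotent by blast
qed

section \<open>The band of idempotents and the b-lattice congruence\<close>

definition idem_sum :: "'a \<Rightarrow> 'a \<Rightarrow> 'a" where
  "idem_sum a b = idem_of (a \<oplus> b)"

lemma idem_of_add_eq_idem_sum: "idem_of (a \<oplus> b) = idem_sum (idem_of a) (idem_of b)"
  unfolding idem_sum_def by simp

lemma band_on_idem_sum: "band_on (range idem_of) idem_sum"
  by unfold_locales (auto simp: idem_sum_def idem_of_double)

interpretation idem_band: band_on "range idem_of" idem_sum
  by (rule band_on_idem_sum)

definition idem_D :: "'a \<Rightarrow> 'a \<Rightarrow> bool" where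
  "idem_D a b \<longleftrightarrow> band_D idem_sum (idem_of a) (idem_of b)"

lemma idem_D_iff:
  "idem_D a b \<longleftrightarrow> idem_of (a \<oplus> b \<oplus> a) = idem_of a \<and> idem_of (b \<oplus> a \<oplus> b) = idem_of b"
  unfolding idem_D_def band_D_def idem_sum_def by simp

lemma idem_D_sandwich: "idem_D a b \<Longrightarrow> idem_of (a \<oplus> b \<oplus> a) = idem_of a"
  unfolding idem_D_iff by blast

lemma idem_D_refl: "idem_D a a"
  unfolding idem_D_def by (simp add: idem_band.band_D_refl)

lemma idem_D_sym: "idem_D a b \<Longrightarrow> idem_D b a"
  unfolding idem_D_def by (rule idem_band.band_D_sym)

lemma idem_D_trans: "idem_D a b \<Longrightarrow> idem_D b c \<Longrightarrow> idem_D a c"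
  unfolding idem_D_def by (rule idem_band.band_D_trans)

lemma idem_D_of_idem_of_eq: "idem_of a = idem_of b \<Longrightarrow> idem_D a b"
  unfolding idem_D_def by (simp add: idem_band.band_D_refl)

lemma idem_D_add:
  assumes "idem_D a b" "idem_D c d"
  shows "idem_D (a \<oplus> c) (b \<oplus> d)"
proof -
  have "band_D idem_sum (idem_sum (idem_of a) (idem_of c)) (idem_sum (idem_of b) (idem_of c))"
    using assms(1) unfolding idem_D_def by (intro idem_band.band_D_mult_right) auto
  moreover have "band_D idem_sum (idem_sum (idem_of b) (idem_of c)) (idem_sum (idem_of b) (idem_of d))"
    using assms(2) unfolding idem_D_def by (intro idem_band.band_D_mult_left) auto
  ultimately show ?thesis
    unfolding idem_D_def idem_of_add_eq_idem_sum
    by (rule idem_band.band_D_trans)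
qed

lemma idem_D_mult_right:
  assumes "idem_D a b"
  shows "idem_D (a \<otimes> c) (b \<otimes> c)"
proof -
  have "idem_of (a \<oplus> b \<oplus> a) = idem_of a" "idem_of (b \<oplus> a \<oplus> b) = idem_of b"
    using assms unfolding idem_D_iff by auto
  then have "idem_of ((a \<oplus> b \<oplus> a) \<otimes> c) = idem_of (a \<otimes> c)"
    "idem_of ((b \<oplus> a \<oplus> b) \<otimes> c) = idem_of (b \<otimes> c)"
    by (simp_all only: idem_of_mult)
  then show ?thesis unfolding idem_D_iff by (simp add: sdistrib_right)
qed

lemma idem_D_mult_left:
  assumes "idem_D a b"
  shows "idem_D (c \<otimes> a) (c \<otimes> b)"
proof -
  have "idem_of (a \<oplus> b \<oplus> a) = idem_of a" "idem_of (b \<oplus> a \<oplus> b) = idem_of b"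
    using assms unfolding idem_D_iff by auto
  then have "idem_of (c \<otimes> (a \<oplus> b \<oplus> a)) = idem_of (c \<otimes> a)"
    "idem_of (c \<otimes> (b \<oplus> a \<oplus> b)) = idem_of (c \<otimes> b)"
    by (simp_all only: idem_of_mult)
  then show ?thesis unfolding idem_D_iff by (simp add: sdistrib_left)
qed

lemma idem_D_mult: "idem_D a b \<Longrightarrow> idem_D c d \<Longrightarrow> idem_D (a \<otimes> c) (b \<otimes> d)"
  using idem_D_trans idem_D_mult_right idem_D_mult_left by blast

lemma idem_D_congruence: "congruence pl ml idem_D"
  unfolding congruence_def
proof (intro conjI allI impI)
  show "equivp idem_D"
    by (rule equivpI) (auto simp: reflp_def symp_def transp_def
        intro: idem_D_refl idem_D_sym idem_D_trans)
qed (auto intro: idem_D_add idem_D_mult)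

lemma idem_D_double: "idem_D a (a \<oplus> a)"
  by (rule idem_D_of_idem_of_eq) (simp add: idem_of_double)

lemma idem_D_square: "idem_D a (a \<otimes> a)"
  by (rule idem_D_of_idem_of_eq) (simp add: idem_of_mult idem_of_mult_self)

lemma idem_D_quotient_b_lattice: "quotient_b_lattice pl ml idem_D"
  unfolding quotient_b_lattice_def
proof (intro conjI allI)
  show "idem_D (a \<otimes> a) a" "idem_D (a \<oplus> a) a" for a
    using idem_D_square idem_D_double by (simp_all add: idem_D_sym)
  show "idem_D (a \<oplus> b) (b \<oplus> a)" for a b
    unfolding idem_D_def idem_of_add_eq_idem_sum by (rule idem_band.band_D_commute) auto
qed

section \<open>The completely regular part of a class\<close>

definition idem_D_class :: "'a \<Rightarrow> 'a set" where
  "idem_D_class a = {x. idem_D a x}"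

text \<open>The completely regular elements of the class of a; this is the rectangular skew-ring
  of which the class is a nil-extension.\<close>

definition group_part :: "'a \<Rightarrow> 'a set" where
  "group_part a = {x. idem_D a x \<and> in_group (idem_of x) x}"

lemma group_part_subset_class: "group_part a \<subseteq> idem_D_class a"
  unfolding group_part_def idem_D_class_def by auto

lemma idem_D_class_add:
  assumes "x \<in> idem_D_class a" "y \<in> idem_D_class a"
  shows "x \<oplus> y \<in> idem_D_class a"
proof -
  have "idem_D (a \<oplus> a) (x \<oplus> y)" using assms unfolding idem_D_class_def by (simp add: idem_D_add)
  then show ?thesis unfolding idem_D_class_def mem_Collect_eq by (rule idem_D_trans[OF idem_D_double])
qed

lemma idem_D_class_mult:
  assumes "x \<in> idem_D_class a" "y \<in> idem_D_class a"
  shows "x \<otimes> y \<in> idem_D_class a"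
proof -
  have "idem_D (a \<otimes> a) (x \<otimes> y)" using assms unfolding idem_D_class_def by (simp add: idem_D_mult)
  then show ?thesis unfolding idem_D_class_def mem_Collect_eq by (rule idem_D_trans[OF idem_D_square])
qed

lemma idem_D_class_closed: "closed_sub pl ml (idem_D_class a)"
  unfolding closed_sub_def by (simp add: idem_D_class_add idem_D_class_mult)

lemma group_part_same_idem:
  assumes k: "k \<in> group_part a" and h: "in_group (idem_of k) h"
  shows "h \<in> group_part a"
proof -
  have "idem_of h = idem_of k" using idem_of_in_group h .
  then have "idem_D k h" by (intro idem_D_of_idem_of_eq) simp
  then have "idem_D a h" using k idem_D_trans[of a k h] unfolding group_part_def by simp
  then show ?thesis using h \<open>idem_of h = idem_of k\<close> unfolding group_part_def by simp
qed

lemma in_group_sandwich: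
  assumes "idem_D a x"
  shows "in_group (idem_of a) (idem_of a \<oplus> x \<oplus> idem_of a)"
proof (rule in_group_idem_ofI)
  show idem: "idem_of a \<oplus> idem_of a = idem_of a" by (rule idem_of_idempotent)
  then show "idem_of a \<oplus> (idem_of a \<oplus> x \<oplus> idem_of a) = idem_of a \<oplus> x \<oplus> idem_of a"
    and "(idem_of a \<oplus> x \<oplus> idem_of a) \<oplus> idem_of a = idem_of a \<oplus> x \<oplus> idem_of a"
    by (simp_all add: add_assoc_subst[OF idem])
  show "idem_of (idem_of a \<oplus> x \<oplus> idem_of a) = idem_of a"
    using idem_D_sandwich[OF assms] by simp
qed

lemma in_group_of_add_idem_right:
  assumes g: "in_group e (y \<oplus> e)" and ey: "e \<oplus> y = y"
  shows "in_group (idem_of y) y"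
proof -
  obtain r where r: "in_group e r" "(y \<oplus> e) \<oplus> r = e" "r \<oplus> (y \<oplus> e) = e"
    using in_group_inverse g by blast
  have yr: "y \<oplus> r = e" using r(2) by (simp add: in_groupD(2)[OF r(1)])
  have "(r \<oplus> y) \<oplus> (r \<oplus> y) = r \<oplus> y" by (simp add: add_assoc_subst[OF yr] ey)
  moreover have "idem_of (r \<oplus> y) = idem_of y"
    using idem_of_add_idem_of(1)[of r y] idem_of_in_group[OF r(1)] ey by simp
  ultimately have ry: "idem_of y = r \<oplus> y" using idem_of_idempotent_eq by metis
  have "y \<oplus> idem_of y = y" unfolding ry by (simp add: add_assoc_subst[OF yr] ey)
  moreover have ye: "idem_of y \<oplus> e = e" unfolding ry using r(3) by simp
  then have "idem_of y \<oplus> y = y" using add_assoc_subst[OF ye, of y] ey by simp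
  ultimately show ?thesis using in_group_idem_ofI idem_of_idempotent by blast
qed

lemma in_group_of_add_idem_left:
  assumes g: "in_group e (e \<oplus> y)" and ye: "y \<oplus> e = y"
  shows "in_group (idem_of y) y"
proof -
  obtain r where r: "in_group e r" "(e \<oplus> y) \<oplus> r = e" "r \<oplus> (e \<oplus> y) = e"
    using in_group_inverse g by blast
  have ry: "r \<oplus> y = e" using r(3) add_assoc_subst[OF in_groupD(3)[OF r(1)], of y] by simp
  have "(y \<oplus> r) \<oplus> (y \<oplus> r) = y \<oplus> r"
    by (simp add: add_assoc_subst[OF ry] add_assoc_subst[OF ye])
  moreover have "idem_of (y \<oplus> r) = idem_of y"
    using idem_of_add_idem_of(2)[of y r] idem_of_in_group[OF r(1)] ye by simp
  ultimately have yr: "idem_of y = y \<oplus> r" using idem_of_idempotent_eq by metis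
  have "idem_of y \<oplus> y = y" unfolding yr by (simp add: ry ye)
  moreover have "e \<oplus> idem_of y = e" unfolding yr using r(2) by simp
  then have "y \<oplus> idem_of y = y" using add_assoc_subst[OF ye, of "idem_of y"] ye by simp
  ultimately show ?thesis using in_group_idem_ofI idem_of_idempotent by blast
qed

lemma group_part_add_right:
  assumes k: "k \<in> group_part a" and x: "x \<in> idem_D_class a"
  shows "k \<oplus> x \<in> group_part a"
proof -
  let ?e = "idem_of k"
  have gk: "in_group ?e k" using k unfolding group_part_def by simp
  have kx: "idem_D k x"
    using idem_D_trans[OF idem_D_sym[of a k], of x] k x
    unfolding group_part_def idem_D_class_def by simp
  have "in_group ?e (k \<oplus> (?e \<oplus> x \<oplus> ?e))" using in_group_add[OF gk in_group_sandwich[OF kx]] .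
  then have "in_group ?e ((k \<oplus> x) \<oplus> ?e)" by (simp add: add_assoc_subst[OF in_groupD(3)[OF gk]])
  moreover have "?e \<oplus> (k \<oplus> x) = k \<oplus> x" by (rule add_assoc_subst[OF in_groupD(2)[OF gk]])
  ultimately have "in_group (idem_of (k \<oplus> x)) (k \<oplus> x)" by (rule in_group_of_add_idem_right)
  moreover have "k \<oplus> x \<in> idem_D_class a"
    using idem_D_class_add x k group_part_subset_class by blast
  ultimately show ?thesis unfolding group_part_def idem_D_class_def by simp
qed

lemma group_part_add_left:
  assumes k: "k \<in> group_part a" and x: "x \<in> idem_D_class a"
  shows "x \<oplus> k \<in> group_part a"
proof -
  let ?e = "idem_of k"
  have gk: "in_group ?e k" using k unfolding group_part_def by simp
  have kx: "idem_D k x"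
    using idem_D_trans[OF idem_D_sym[of a k], of x] k x
    unfolding group_part_def idem_D_class_def by simp
  have "in_group ?e ((?e \<oplus> x \<oplus> ?e) \<oplus> k)" using in_group_add[OF in_group_sandwich[OF kx] gk] .
  then have "in_group ?e (?e \<oplus> (x \<oplus> k))" using in_groupD(2)[OF gk] by simp
  moreover have "(x \<oplus> k) \<oplus> ?e = x \<oplus> k" using in_groupD(3)[OF gk] by simp
  ultimately have "in_group (idem_of (x \<oplus> k)) (x \<oplus> k)" by (rule in_group_of_add_idem_left)
  moreover have "x \<oplus> k \<in> idem_D_class a"
    using idem_D_class_add x k group_part_subset_class by blast
  ultimately show ?thesis unfolding group_part_def idem_D_class_def by simp
qed

lemma group_part_mult_right:
  assumes k: "k \<in> group_part a" and x: "x \<in> idem_D_class a"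
  shows "k \<otimes> x \<in> group_part a"
proof -
  have g: "in_group (idem_of k \<otimes> x) (k \<otimes> x)"
    using in_group_mult_right k unfolding group_part_def by auto
  then have "in_group (idem_of (k \<otimes> x)) (k \<otimes> x)" by (simp add: idem_of_in_group[OF g])
  moreover have "k \<otimes> x \<in> idem_D_class a"
    using idem_D_class_closed x k group_part_subset_class unfolding closed_sub_def by blast
  ultimately show ?thesis unfolding group_part_def idem_D_class_def by simp
qed

lemma group_part_mult_left:
  assumes k: "k \<in> group_part a" and x: "x \<in> idem_D_class a"
  shows "x \<otimes> k \<in> group_part a"
proof -
  have g: "in_group (x \<otimes> idem_of k) (x \<otimes> k)"
    using in_group_mult_left k unfolding group_part_def by auto
  then have "in_group (idem_of (x \<otimes> k)) (x \<otimes> k)" by (simp add: idem_of_in_group[OF g])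
  moreover have "x \<otimes> k \<in> idem_D_class a"
    using idem_D_class_closed x k group_part_subset_class unfolding closed_sub_def by blast
  ultimately show ?thesis unfolding group_part_def idem_D_class_def by simp
qed

lemma nsm_in_group_part:
  assumes "x \<in> idem_D_class a"
  shows "\<exists>n\<ge>1. N n x \<in> group_part a"
proof -
  obtain n where n: "in_group (idem_of x) (N (Suc n) x)" using idem_of_group_multiple by blast
  have "idem_D x (N (Suc n) x)" by (rule idem_D_of_idem_of_eq) (simp add: idem_of_nsm)
  then have "idem_D a (N (Suc n) x)"
    using assms idem_D_trans[of a x] unfolding idem_D_class_def by simp
  then have "N (Suc n) x \<in> group_part a"
    using n unfolding group_part_def by (simp add: idem_of_nsm)
  then show ?thesis by (intro exI[of _ "Suc n"]) simp
qed

lemma nil_extension_group_part: "nil_extension pl ml (idem_D_class a) (group_part a)"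
  unfolding nil_extension_def
proof (intro conjI ballI)
  show "closed_sub pl ml (idem_D_class a)" by (rule idem_D_class_closed)
  show "group_part a \<subseteq> idem_D_class a" by (rule group_part_subset_class)
  show "closed_sub pl ml (group_part a)"
    unfolding closed_sub_def
    by (auto intro: group_part_add_right group_part_mult_right
        dest: group_part_subset_class[THEN subsetD])
  fix k x assume "k \<in> group_part a" "x \<in> idem_D_class a"
  then show "k \<oplus> x \<in> group_part a" "x \<oplus> k \<in> group_part a"
    "k \<otimes> x \<in> group_part a" "x \<otimes> k \<in> group_part a"
    by (simp_all add: group_part_add_right group_part_add_left
        group_part_mult_right group_part_mult_left)
qed (rule nsm_in_group_part)

lemma group_part_compl_regular:
  assumes k: "k \<in> group_part a"
  shows "compl_regular (group_part a) pl ml k"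
proof -
  have gk: "in_group (idem_of k) k" using k unfolding group_part_def by simp
  obtain h where h: "in_group (idem_of k) h" "k \<oplus> h = idem_of k" "h \<oplus> k = idem_of k"
    using in_group_inverse gk by blast
  have "k \<oplus> h \<oplus> k = k" using add_assoc_subst[OF h(2), of k] in_groupD(2)[OF gk] by simp
  moreover have "k \<otimes> (k \<oplus> h) = k \<oplus> h" using h(2) mult_idem_of_absorb by simp
  ultimately show ?thesis
    unfolding compl_regular_def using group_part_same_idem[OF k h(1)] h(2,3) in_groupD(2)[OF gk]
    by (intro bexI[of _ h]) simp_all
qed

lemma group_part_sandwich:
  assumes k: "k \<in> group_part a" and l: "l \<in> group_part a"
  shows "\<exists>w\<in>group_part a. k = k \<oplus> l \<oplus> w"
proof -
  let ?e = "idem_of k" and ?f = "idem_of l"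
  have gk: "in_group ?e k" and gl: "in_group ?f l" using k l unfolding group_part_def by auto
  have "idem_D k l"
    using idem_D_trans[OF idem_D_sym[of a k], of l] k l unfolding group_part_def by simp
  moreover have "idem_D l ?f" by (rule idem_D_of_idem_of_eq) simp
  ultimately have "idem_D k ?f" by (rule idem_D_trans)
  then obtain g where g: "in_group ?e g" "(?e \<oplus> ?f \<oplus> ?e) \<oplus> g = ?e"
    using in_group_inverse in_group_sandwich by blast
  obtain h where h: "in_group ?f h" "l \<oplus> h = ?f" using in_group_inverse gl by blast
  have "k = k \<oplus> (?e \<oplus> ?f \<oplus> ?e) \<oplus> g" using in_groupD(3)[OF gk] g(2) by simp
  also have "\<dots> = k \<oplus> ?f \<oplus> ?e \<oplus> g" by (simp add: add_assoc_subst[OF in_groupD(3)[OF gk]])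
  also have "\<dots> = k \<oplus> l \<oplus> (h \<oplus> g)"
    using add_assoc_subst[OF h(2)] in_groupD(2)[OF g(1)] by simp
  finally have "k = k \<oplus> l \<oplus> (h \<oplus> g)" .
  moreover have "h \<oplus> g \<in> group_part a"
  proof (rule group_part_add_right)
    show "h \<in> group_part a" by (rule group_part_same_idem[OF l h(1)])
    show "g \<in> idem_D_class a"
      using group_part_same_idem[OF k g(1)] group_part_subset_class by blast
  qed
  ultimately show ?thesis by blast
qed

lemma group_part_compl_simple: "compl_simple pl ml (group_part a)"
  unfolding compl_simple_def
proof (intro conjI ballI)
  show "closed_sub pl ml (group_part a)"
    using nil_extension_group_part unfolding nil_extension_def by blast
  then have closed: "\<And>x y. x \<in> group_part a \<Longrightarrow> y \<in> group_part a \<Longrightarrow> x \<oplus> y \<in> group_part a"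
    unfolding closed_sub_def by blast
  show "compl_regular (group_part a) pl ml k" if "k \<in> group_part a" for k
    using group_part_compl_regular that .
  fix k l assume k: "k \<in> group_part a" and l: "l \<in> group_part a"
  obtain w where "w \<in> group_part a" "k = k \<oplus> l \<oplus> w" using group_part_sandwich[OF k l] by blast
  moreover obtain w' where "w' \<in> group_part a" "l = l \<oplus> k \<oplus> w'"
    using group_part_sandwich[OF l k] by blast
  ultimately show "greenJ (group_part a) pl k l" using greenJ_if_sandwiches[OF closed] k l by blast
qed

lemma group_part_idempotent_add:
  assumes periodic: "idempotent_sums_periodic pl"
    and e: "e \<in> addE pl (group_part a)" and f: "f \<in> addE pl (group_part a)"
  shows "e \<oplus> f \<in> addE pl (group_part a)"
proof -
  have "e \<oplus> f \<in> group_part a"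
    using e f nil_extension_group_part unfolding addE_def nil_extension_def closed_sub_def by blast
  then have g: "in_group (idem_of (e \<oplus> f)) (e \<oplus> f)" unfolding group_part_def by simp
  obtain n where n: "n \<ge> 1" "N n (e \<oplus> f) = N (n + 1) (e \<oplus> f)"
    using periodic e f unfolding idempotent_sums_periodic_def addE_def by blast
  then obtain m where m: "n = Suc m" by (cases n) auto
  have "N (Suc m) (e \<oplus> f) \<oplus> (e \<oplus> f) = N (Suc (Suc m)) (e \<oplus> f)"
    by (simp only: nsm.simps(3))
  also have "\<dots> = N (Suc m) (e \<oplus> f)" using n(2) m by simp
  finally have ef: "e \<oplus> f = idem_of (e \<oplus> f)" by (rule in_group_cancel[OF g])
  have "(e \<oplus> f) \<oplus> (e \<oplus> f) = e \<oplus> f"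
    using idem_of_idempotent[of "e \<oplus> f"] unfolding ef[symmetric] .
  then show ?thesis using \<open>e \<oplus> f \<in> group_part a\<close> unfolding addE_def by simp
qed

lemma b_lattice_of_nil_ext_rsr_if_periodic:
  assumes "idempotent_sums_periodic pl"
  shows "b_lattice_of_nil_ext_rsr pl ml"
  unfolding b_lattice_of_nil_ext_rsr_def
proof (intro exI[of _ idem_D] conjI allI)
  show "congruence pl ml idem_D" by (rule idem_D_congruence)
  show "quotient_b_lattice pl ml idem_D" by (rule idem_D_quotient_b_lattice)
  fix a
  show "closed_sub pl ml {x. idem_D a x}"
    using idem_D_class_closed unfolding idem_D_class_def .
  have "rect_skew_ring pl ml (group_part a)"
    unfolding rect_skew_ring_def
    using group_part_compl_simple group_part_idempotent_add[OF assms] by blast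
  then show "\<exists>K. nil_extension pl ml {x. idem_D a x} K \<and> rect_skew_ring pl ml K"
    using nil_extension_group_part unfolding idem_D_class_def by blast
qed

end

section \<open>Green's relations of the additive reduct\<close>

context semiring_ops
begin

lemma lideal_subset: "b = s \<oplus> a \<Longrightarrow> lideal UNIV pl b \<subseteq> lideal UNIV pl a"
  unfolding lideal_def by (auto simp del: sadd_assoc simp: sadd_assoc[symmetric])

lemma rideal_subset: "b = a \<oplus> s \<Longrightarrow> rideal UNIV pl b \<subseteq> rideal UNIV pl a"
  unfolding rideal_def by auto

lemma in_group_ideals:
  assumes "in_group e g"
  shows "lideal UNIV pl g = lideal UNIV pl e" "rideal UNIV pl g = rideal UNIV pl e"
proof -
  obtain h where "g \<oplus> h = e" "h \<oplus> g = e" using in_group_inverse assms by blast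
  then show "lideal UNIV pl g = lideal UNIV pl e" "rideal UNIV pl g = rideal UNIV pl e"
    using lideal_subset[of g g e] lideal_subset[of e h g] rideal_subset[of g e g]
      rideal_subset[of e g h] in_groupD[OF assms] by auto
qed

lemma idempotent_eq_if_greenL_greenR:
  assumes "u \<oplus> u = u" "v \<oplus> v = v"
    and "lideal UNIV pl u = lideal UNIV pl v" "rideal UNIV pl u = rideal UNIV pl v"
  shows "u = v"
proof -
  have "u \<in> lideal UNIV pl v" using assms(3) unfolding lideal_def by auto
  then have "u \<oplus> v = u" using assms(2) unfolding lideal_def by auto
  moreover have "v \<in> rideal UNIV pl u" using assms(4) unfolding rideal_def by auto
  then have "u \<oplus> v = v" using assms(1) add_assoc_subst[OF assms(1)] unfolding rideal_def by auto
  ultimately show ?thesis by simp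
qed

lemma mreg_regular:
  assumes "add_quasi_regular pl"
  shows "1 \<le> mreg pl b" "add_regular UNIV pl (N (mreg pl b) b)"
proof -
  have "\<exists>n. 1 \<le> n \<and> add_regular UNIV pl (N n b)"
    using assms unfolding add_quasi_regular_def by blast
  then show "1 \<le> mreg pl b" "add_regular UNIV pl (N (mreg pl b) b)"
    unfolding mreg_def by (metis (mono_tags, lifting) LeastI_ex)+
qed

lemma mreg_eq_1: "add_regular UNIV pl b \<Longrightarrow> mreg pl b = 1"
  unfolding mreg_def by (rule Least_equality) simp_all

end

context qc_regular_semiring
begin

lemma add_quasi_regular: "add_quasi_regular pl"
  using quasi_compl_regular
  unfolding add_quasi_regular_def add_regular_def quasi_compl_regular_def compl_regular_def
  by blast

lemma in_group_mreg_multiple: "in_group (idem_of b) (N (mreg pl b) b)"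
proof -
  obtain x where "N (mreg pl b) b \<oplus> x \<oplus> N (mreg pl b) b = N (mreg pl b) b"
    using mreg_regular(2)[OF add_quasi_regular] unfolding add_regular_def by (metis sadd_assoc)
  then have "in_group (idem_of (N (mreg pl b) b)) (N (mreg pl b) b)" by (rule add_regular_in_group)
  moreover obtain m where "mreg pl b = Suc m"
    using mreg_regular(1)[OF add_quasi_regular, of b] by (cases "mreg pl b") auto
  ultimately show ?thesis using idem_of_nsm by simp
qed

text \<open>m(b) b and m(b\<twosuperior>) b\<twosuperior> lie in the subgroups of b\<degree> and
  (b\<twosuperior>)\<degree> = b\<degree>, so both are H-related to b\<degree>.\<close>

lemma Hstar_square: "Hstar pl (b \<otimes> b) b"
  unfolding Hstar_def Lstar_def Rstar_def greenL_def greenR_def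
  using in_group_ideals[OF in_group_mreg_multiple] idem_of_mult idem_of_mult_self by simp

end

section \<open>Consequences of a b-lattice decomposition\<close>

context semiring_ops
begin

lemma b_lattice_congruence_sandwich:
  assumes "congruence pl ml r" "quotient_b_lattice pl ml r"
  shows "r (a \<oplus> b \<oplus> a) (a \<oplus> b)" "r (a \<oplus> b \<oplus> a) (b \<oplus> a)"
proof -
  have eqv: "equivp r" and add: "\<And>a b c d. r a b \<Longrightarrow> r c d \<Longrightarrow> r (a \<oplus> c) (b \<oplus> d)"
    using assms(1) unfolding congruence_def by blast+
  have comm: "r (x \<oplus> y) (y \<oplus> x)" and idem: "r (x \<oplus> x) x" for x y
    using assms(2) unfolding quotient_b_lattice_def by auto
  have "r (a \<oplus> (b \<oplus> a)) (a \<oplus> (a \<oplus> b))" using add[OF equivp_reflp[OF eqv] comm] .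
  moreover have "r (a \<oplus> (a \<oplus> b)) (a \<oplus> b)" using add[OF idem equivp_reflp[OF eqv]] by simp
  ultimately show aba: "r (a \<oplus> b \<oplus> a) (a \<oplus> b)" by (simp add: equivp_transp[OF eqv])
  show "r (a \<oplus> b \<oplus> a) (b \<oplus> a)" by (rule equivp_transp[OF eqv aba comm])
qed

text \<open>A subgroup element g of the class: the inverse w of a multiple G \<in> K of g is
  congruent to G (both are congruent to G + w), so the identity G + w lies in the
  bi-ideal K, and so does g.\<close>

lemma nil_extension_in_group:
  assumes cong: "congruence pl ml r" "quotient_b_lattice pl ml r"
    and nil: "nil_extension pl ml {y. r a y} K" and g: "r a g" "in_group e g"
  shows "g \<in> K"
proof -
  have eqv: "equivp r" using cong(1) unfolding congruence_def by blast
  have bi: "\<And>k y. k \<in> K \<Longrightarrow> r a y \<Longrightarrow> k \<oplus> y \<in> K \<and> y \<oplus> k \<in> K" and KC: "K \<subseteq> {y. r a y}"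
    using nil unfolding nil_extension_def by auto
  obtain n where n: "n \<ge> 1" "N n g \<in> K" using nil g(1) unfolding nil_extension_def by blast
  then obtain m where m: "n = Suc m" by (cases n) auto
  define G where "G = N n g"
  have "in_group e G" unfolding G_def m by (rule in_group_nsm[OF g(2)])
  then obtain w where w: "in_group e w" "G \<oplus> w = e" "w \<oplus> G = e" using in_group_inverse by blast
  have "G \<oplus> w \<oplus> G = G" using add_assoc_subst[OF w(2), of G] in_groupD(2)[OF \<open>in_group e G\<close>] by simp
  then have "r G (G \<oplus> w)" using b_lattice_congruence_sandwich(1)[OF cong, of G w] by simp
  moreover have "w \<oplus> G \<oplus> w = w" using add_assoc_subst[OF w(3), of w] in_groupD(2)[OF w(1)] by simp
  then have "r w (G \<oplus> w)" using b_lattice_congruence_sandwich(2)[OF cong, of w G] by simp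
  moreover have "r a G" using KC n(2) G_def by auto
  ultimately have "r a w" by (metis equivp_symp equivp_transp eqv)
  then have "e \<in> K" using bi[of G w] n(2) w(2) G_def by auto
  then show ?thesis using bi[of e g] g(1) in_groupD(2)[OF g(2)] by simp
qed

lemma quasi_compl_regular_if_b_lattice:
  assumes "b_lattice_of_nil_ext_rsr pl ml"
  shows "quasi_compl_regular pl ml"
  unfolding quasi_compl_regular_def
proof
  fix a
  obtain r K where r: "congruence pl ml r"
    and K: "nil_extension pl ml {x. r a x} K" "rect_skew_ring pl ml K"
    using assms unfolding b_lattice_of_nil_ext_rsr_def by blast
  have "r a a" using r unfolding congruence_def by (meson equivp_reflp)
  then obtain n where n: "n \<ge> 1" "N n a \<in> K" using K(1) unfolding nil_extension_def by blast
  then have "compl_regular K pl ml (N n a)"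
    using K(2) unfolding rect_skew_ring_def compl_simple_def by blast
  then have "compl_regular UNIV pl ml (N n a)" unfolding compl_regular_def by blast
  then show "\<exists>n\<ge>1. compl_regular UNIV pl ml (N n a)" using n(1) by blast
qed

end

context qc_regular_semiring
begin

lemma regular_doubling_if_b_lattice:
  assumes "b_lattice_of_nil_ext_rsr pl ml"
  shows "regular_doubling pl"
  unfolding regular_doubling_def
proof (intro allI impI)
  fix a x assume "a = (a \<oplus> x) \<oplus> a"
  then have axa: "a \<oplus> x \<oplus> a = a" by simp
  obtain r K where r: "congruence pl ml r" "quotient_b_lattice pl ml r"
    and K: "nil_extension pl ml {x. r a x} K" "rect_skew_ring pl ml K"
    using assms unfolding b_lattice_of_nil_ext_rsr_def by blast
  have idem: "(a \<oplus> x) \<oplus> (a \<oplus> x) = a \<oplus> x" "(x \<oplus> a) \<oplus> (x \<oplus> a) = x \<oplus> a"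
    using axa by (metis sadd_assoc)+
  have "r a (a \<oplus> x)" "r a (x \<oplus> a)"
    using b_lattice_congruence_sandwich[OF r, of a x] axa by simp_all
  then have "a \<oplus> x \<in> K" "x \<oplus> a \<in> K"
    using nil_extension_in_group[OF r K(1)] in_group_self idem by blast+
  then have "(a \<oplus> x) \<oplus> (x \<oplus> a) \<in> addE pl K"
    using K(2) idem unfolding rect_skew_ring_def addE_def by blast
  then have "idem_of ((a \<oplus> x) \<oplus> (x \<oplus> a)) = (a \<oplus> x) \<oplus> (x \<oplus> a)"
    unfolding addE_def by (simp add: idem_of_idempotent_eq)
  moreover have "idem_of ((a \<oplus> x) \<oplus> (x \<oplus> a)) = idem_of a"
    using idem_of_add_double[of a x a] axa by simp
  ultimately have "(a \<oplus> x) \<oplus> (x \<oplus> a) = idem_of a" by simp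
  then show "a = (a \<oplus> N 2 x) \<oplus> N 2 a"
    using add_assoc_subst[of "a \<oplus> x" "x \<oplus> a" "idem_of a" a] in_groupD(2)[OF add_regular_in_group[OF axa]]
    by (simp add: nsm_2)
qed

end

section \<open>Consequences of the identity a + 2x + 2a = a\<close>

context semiring_ops
begin

lemma regular_doublingD:
  assumes "regular_doubling pl" "a \<oplus> x \<oplus> a = a"
  shows "a \<oplus> x \<oplus> x \<oplus> a \<oplus> a = a"
  using assms(1)[unfolded regular_doubling_def, rule_format, of a x] assms(2) by (simp add: nsm_2)

lemma in_group_if_double_divides:
  assumes "a \<oplus> a \<oplus> s = a" "t \<oplus> a \<oplus> a = a"
  shows "in_group (a \<oplus> s) a"
proof -
  define e where "e = a \<oplus> s"
  have ae: "a \<oplus> e = a" unfolding e_def using assms(1) by simp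
  have "t \<oplus> a = t \<oplus> (a \<oplus> a \<oplus> s)" using assms(1) by simp
  also have "\<dots> = e" unfolding e_def using add_assoc_subst[OF assms(2), of s] by simp
  finally have ta: "t \<oplus> a = e" .
  have ea: "e \<oplus> a = a" using assms(2) by (simp add: ta[symmetric])
  have "e \<oplus> e = e" using add_assoc_subst[OF ea, of s] by (simp add: e_def[symmetric])
  moreover have "a \<oplus> (e \<oplus> s) = e" using add_assoc_subst[OF ae, of s] by (simp add: e_def[symmetric])
  moreover have "(e \<oplus> s) \<oplus> a = t \<oplus> (e \<oplus> a)"
    unfolding e_def using add_assoc_subst[OF ta[unfolded e_def], of "s \<oplus> a"] by simp
  then have "(e \<oplus> s) \<oplus> a = e" using ea ta by simp
  ultimately show ?thesis using in_groupI ea ae unfolding e_def by blast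
qed

text \<open>With x' = x + a + x both a + x' + a = a and x' + a + x' = x' hold, and the identity
  applied to a and to x' gives a \<in> (a + a) + S and a \<in> S + (a + a).\<close>

lemma regular_doubling_in_group:
  assumes D: "regular_doubling pl" and ax: "a \<oplus> x \<oplus> a = a"
  shows "\<exists>e. in_group e a"
proof -
  have axy: "a \<oplus> (x \<oplus> (a \<oplus> y)) = a \<oplus> y" for y using add_assoc_subst[OF ax, of y] by simp
  define x' where "x' = x \<oplus> a \<oplus> x"
  have x'1: "a \<oplus> x' \<oplus> a = a" unfolding x'_def using axy ax by simp
  have x'2: "x' \<oplus> a \<oplus> x' = x'" unfolding x'_def by (simp add: axy)
  have x'3: "x' \<oplus> a \<oplus> a \<oplus> x' \<oplus> x' = x'" using regular_doublingD[OF D x'2] .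
  have "a \<oplus> a \<oplus> (x' \<oplus> x' \<oplus> a) = (a \<oplus> x' \<oplus> a) \<oplus> a \<oplus> x' \<oplus> x' \<oplus> a" using x'1 by simp
  also have "\<dots> = a \<oplus> (x' \<oplus> a \<oplus> a \<oplus> x' \<oplus> x') \<oplus> a" by simp
  also have "\<dots> = a" using x'3 x'1 by simp
  finally have "a \<oplus> a \<oplus> (x' \<oplus> x' \<oplus> a) = a" .
  moreover have "(a \<oplus> x \<oplus> x) \<oplus> a \<oplus> a = a" using regular_doublingD[OF D ax] by simp
  ultimately show ?thesis using in_group_if_double_divides by blast
qed

lemma Hstar_square_absorbs_identity:
  assumes aqr: "add_quasi_regular pl" and H: "Hstar pl (b \<otimes> b) b" and g: "in_group e b"
  shows "b \<otimes> e = e"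
proof -
  obtain h where "b \<oplus> h = e" using in_group_inverse g by blast
  then have "b \<oplus> h \<oplus> b = b" using add_assoc_subst[of b h e b] in_groupD(2)[OF g] by simp
  then have "add_regular UNIV pl b" unfolding add_regular_def by (intro bexI[of _ h]) simp_all
  then have m1: "mreg pl b = 1" by (rule mreg_eq_1)
  obtain m where "mreg pl (b \<otimes> b) = Suc m"
    using mreg_regular(1)[OF aqr, of "b \<otimes> b"] by (cases "mreg pl (b \<otimes> b)") auto
  then have "in_group (b \<otimes> e) (N (mreg pl (b \<otimes> b)) (b \<otimes> b))"
    using in_group_nsm[OF in_group_mult_left[OF g]] by simp
  then have "lideal UNIV pl (b \<otimes> e) = lideal UNIV pl e" "rideal UNIV pl (b \<otimes> e) = rideal UNIV pl e"
    using H in_group_ideals[OF g] m1 in_group_ideals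
    unfolding Hstar_def Lstar_def Rstar_def greenL_def greenR_def by simp_all
  then show ?thesis
    using idempotent_eq_if_greenL_greenR idempotent_mult_left in_groupD(1)[OF g] by blast
qed

lemma quasi_compl_regular_if_Hstar_square:
  assumes aqr: "add_quasi_regular pl" and H: "\<forall>b. Hstar pl (b \<otimes> b) b"
    and D: "regular_doubling pl"
  shows "quasi_compl_regular pl ml"
  unfolding quasi_compl_regular_def
proof
  fix a
  obtain n where n: "1 \<le> n" "add_regular UNIV pl (N n a)"
    using aqr unfolding add_quasi_regular_def by blast
  then obtain x where "N n a \<oplus> x \<oplus> N n a = N n a" unfolding add_regular_def by (metis sadd_assoc)
  then obtain e where e: "in_group e (N n a)" using regular_doubling_in_group[OF D] by blast
  obtain h where h: "N n a \<oplus> h = e" "h \<oplus> N n a = e" using in_group_inverse e by blast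
  have "N n a \<otimes> e = e" using Hstar_square_absorbs_identity aqr H e by blast
  then have "compl_regular UNIV pl ml (N n a)"
    unfolding compl_regular_def using h in_groupD(2)[OF e] add_assoc_subst[OF h(1), of "N n a"]
    by (intro bexI[of _ h]) auto
  then show "\<exists>n\<ge>1. compl_regular UNIV pl ml (N n a)" using n(1) by blast
qed

lemma regular_doubling_add_idempotents:
  assumes D: "regular_doubling pl" and u: "u \<oplus> u = u" and v: "v \<oplus> v = v"
    and g: "in_group c (u \<oplus> v)"
  shows "(u \<oplus> v) \<oplus> (u \<oplus> v) = u \<oplus> v"
proof -
  obtain w where w: "(u \<oplus> v) \<oplus> w = c" "w \<oplus> (u \<oplus> v) = c" using in_group_inverse g by blast
  have uv: "(u \<oplus> v) \<oplus> v = u \<oplus> v" "u \<oplus> (u \<oplus> v) = u \<oplus> v"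
    using v add_assoc_subst[OF u] by simp_all
  have ax: "(u \<oplus> v) \<oplus> (v \<oplus> w \<oplus> u) = c \<oplus> u"
    using add_assoc_subst[OF w(1), of u] uv(1) by (simp add: add_assoc_subst[OF v])
  have xa: "(v \<oplus> w \<oplus> u) \<oplus> (u \<oplus> v) = v \<oplus> c" using uv(2) w(2) by simp
  have axa: "(u \<oplus> v) \<oplus> (v \<oplus> w \<oplus> u) \<oplus> (u \<oplus> v) = u \<oplus> v"
    using add_assoc_subst[OF ax, of "u \<oplus> v"] uv(2) in_groupD(2)[OF g] by simp
  have "u \<oplus> v = ((u \<oplus> v) \<oplus> (v \<oplus> w \<oplus> u)) \<oplus> ((v \<oplus> w \<oplus> u) \<oplus> (u \<oplus> v)) \<oplus> (u \<oplus> v)"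
    using regular_doublingD[OF D axa] by simp
  also have "\<dots> = (c \<oplus> u) \<oplus> (v \<oplus> c) \<oplus> (u \<oplus> v)" by (simp only: ax xa)
  also have "\<dots> = (u \<oplus> v) \<oplus> (u \<oplus> v)"
  proof -
    have "c \<oplus> (u \<oplus> (v \<oplus> x)) = u \<oplus> (v \<oplus> x)" "u \<oplus> (v \<oplus> (c \<oplus> x)) = u \<oplus> (v \<oplus> x)" for x
      using add_assoc_subst[OF in_groupD(2)[OF g], of x] add_assoc_subst[OF in_groupD(3)[OF g], of x]
      by simp_all
    then show ?thesis by simp
  qed
  finally show ?thesis by simp
qed

end

context qc_regular_semiring
begin

lemma idem_of_sum_absorbs:
  assumes D: "regular_doubling pl" and e: "e \<oplus> e = e" and f: "f \<oplus> f = f"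
  shows "idem_of (e \<oplus> f) \<oplus> (e \<oplus> f) = idem_of (e \<oplus> f)"
proof -
  define p where "p = idem_of (e \<oplus> f)"
  have pp: "p \<oplus> p = p" unfolding p_def by (rule idem_of_idempotent)
  have ep: "e \<oplus> p = p"
    unfolding p_def using idem_of_add_left_absorb[of e f] idem_of_idempotent_eq[OF e] by simp
  have pf: "p \<oplus> f = p"
    unfolding p_def using idem_of_add_right_absorb[of e f] idem_of_idempotent_eq[OF f] by simp
  have "(p \<oplus> e) \<oplus> (p \<oplus> e) = p \<oplus> e" by (simp add: add_assoc_subst[OF ep] add_assoc_subst[OF pp])
  moreover have "(f \<oplus> p) \<oplus> (f \<oplus> p) = f \<oplus> p" by (simp add: add_assoc_subst[OF pf] pp)
  moreover have "in_group p ((p \<oplus> e) \<oplus> (f \<oplus> p))"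
    using in_group_sandwich[OF idem_D_refl, of "e \<oplus> f"] unfolding p_def by simp
  ultimately have "(p \<oplus> e) \<oplus> (f \<oplus> p) = p"
    using regular_doubling_add_idempotents[OF D] in_group_idempotent_eq by metis
  then have pqp: "p \<oplus> (e \<oplus> f) \<oplus> p = p" by simp
  have "(p \<oplus> (e \<oplus> f)) \<oplus> (p \<oplus> (e \<oplus> f)) = p \<oplus> (e \<oplus> f)"
    using add_assoc_subst[OF pqp, of "e \<oplus> f"] by simp
  moreover have "idem_of (p \<oplus> (e \<oplus> f)) = p" unfolding p_def using idem_of_double[of "e \<oplus> f"] by simp
  ultimately show ?thesis unfolding p_def using idem_of_idempotent_eq p_def by metis
qed

lemma idempotent_sums_periodic_if_regular_doubling:
  assumes "regular_doubling pl"
  shows "idempotent_sums_periodic pl"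
  unfolding idempotent_sums_periodic_def
proof (intro ballI)
  fix e f assume "e \<in> addE pl UNIV" "f \<in> addE pl UNIV"
  then have pq: "idem_of (e \<oplus> f) \<oplus> (e \<oplus> f) = idem_of (e \<oplus> f)"
    using idem_of_sum_absorbs[OF assms] unfolding addE_def by simp
  have absorb: "idem_of (e \<oplus> f) \<oplus> N (Suc k) (e \<oplus> f) = idem_of (e \<oplus> f)" for k
  proof (induction k)
    case (Suc k)
    then show ?case by (simp only: nsm_Suc_Suc_left add_assoc_subst[OF pq])
  qed (simp add: pq)
  obtain n where "in_group (idem_of (e \<oplus> f)) (N (Suc n) (e \<oplus> f))"
    using idem_of_group_multiple by blast
  then have "N (Suc n) (e \<oplus> f) = idem_of (e \<oplus> f)" using absorb[of n] in_groupD(2) by metis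
  moreover have "N (Suc n + 1) (e \<oplus> f) = N (Suc n) (e \<oplus> f) \<oplus> (e \<oplus> f)" by simp
  ultimately show "\<exists>n\<ge>1. N n (e \<oplus> f) = N (n + 1) (e \<oplus> f)"
    using pq by (intro exI[of _ "Suc n"]) simp
qed

end

context semiring_ops
begin

lemma b_lattice_if_periodic:
  assumes "quasi_compl_regular pl ml" "idempotent_sums_periodic pl"
  shows "b_lattice_of_nil_ext_rsr pl ml"
proof -
  interpret qc_regular_semiring pl ml by unfold_locales (rule assms(1))
  show ?thesis by (rule b_lattice_of_nil_ext_rsr_if_periodic[OF assms(2)])
qed

lemma regular_doubling_Hstar_if_b_lattice:
  assumes "b_lattice_of_nil_ext_rsr pl ml"
  shows "add_quasi_regular pl \<and> (\<forall>b. Hstar pl (b \<otimes> b) b) \<and> regular_doubling pl"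
proof -
  interpret qc_regular_semiring pl ml
    by unfold_locales (rule quasi_compl_regular_if_b_lattice[OF assms])
  show ?thesis using add_quasi_regular Hstar_square regular_doubling_if_b_lattice[OF assms] by blast
qed

lemma periodic_if_regular_doubling_Hstar:
  assumes "add_quasi_regular pl" "\<forall>b. Hstar pl (b \<otimes> b) b" "regular_doubling pl"
  shows "quasi_compl_regular pl ml \<and> idempotent_sums_periodic pl"
proof -
  interpret qc_regular_semiring pl ml
    by unfold_locales (rule quasi_compl_regular_if_Hstar_square[OF assms])
  show ?thesis using quasi_compl_regular idempotent_sums_periodic_if_regular_doubling[OF assms(3)]
    by blast
qed

end

theorem theorem3p4:
  fixes pl ml :: "'a \<Rightarrow> 'a \<Rightarrow> 'a"
  assumes "semiring pl ml"
  shows "(b_lattice_of_nil_ext_rsr pl ml \<longleftrightarrow>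
           (quasi_compl_regular pl ml \<and>
            (\<forall>e\<in>addE pl UNIV. \<forall>f\<in>addE pl UNIV. \<exists>n\<ge>1.
                nsm pl n (pl e f) = nsm pl (n + 1) (pl e f))))
       \<and> ((quasi_compl_regular pl ml \<and>
            (\<forall>e\<in>addE pl UNIV. \<forall>f\<in>addE pl UNIV. \<exists>n\<ge>1.
                nsm pl n (pl e f) = nsm pl (n + 1) (pl e f)))
          \<longleftrightarrow>
           (add_quasi_regular pl \<and> (\<forall>b. Hstar pl (ml b b) b) \<and>
            (\<forall>a x. a = pl (pl a x) a \<longrightarrow>
                   a = pl (pl a (nsm pl 2 x)) (nsm pl 2 a))))"
proof -
  interpret semiring_ops pl ml using assms by (rule semiring_ops.intro)
  show ?thesis
    unfolding idempotent_sums_periodic_def[symmetric] regular_doubling_def[symmetric]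
    using b_lattice_if_periodic regular_doubling_Hstar_if_b_lattice
      periodic_if_regular_doubling_Hstar quasi_compl_regular_if_b_lattice
    by blast
qed

end
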